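(* Fix $d\ge1$, the feasible set $\mathcal{X}=\mathbb{R}^d$, starting point $x_0=\mathbf{0}$, and $0<\mu\le L$, with quadratic switching cost. For every online algorithm $\mathcal{A}$ operating in the limited information setting, the competitive ratio satisfies $\mathrm{cr}_{\mathcal{A}}\ge L$.
   Context: A problem instance consists of a horizon $T\ge1$ and differentiable functions $f_1,\dots,f_T:\mathbb{R}^d\to[0,\infty)$ with $\frac{\mu}{2}\|y-x\|^2\le f_t(y)-f_t(x)-\langle\nabla f_t(x),y-x\rangle\le\frac{L}{2}\|y-x\|^2$ for all $x,y$. An online algorithm in the limited information setting chooses, at each time $t$, an action $x_t$ using only $x_0$, the known parameters, and gradients of $f_{t-1}$ (and of earlier functions) evaluated at finitely many (adaptively chosen) points; in particular $x_t$ is chosen without any information about $f_t,\dots,f_T$. The algorithm's cost is $C_{\mathcal{A}}=\sum_{t=1}^T\big(f_t(x_t)+\frac12\|x_t-x_{t-1}\|^2\big)$, $C_{\mathsf{OPT}}$ is the minimum of the same expression over all $(x_1,\dots,x_T)$ with the same $x_0$, and $\mathrm{cr}_{\mathcal{A}}=\sup C_{\mathcal{A}}/C_{\mathsf{OPT}}$ over all problem instances. *)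

theory Defs
  imports "HOL-Analysis.Analysis"
begin

definition valid_instance ::
  "real \<Rightarrow> real \<Rightarrow> nat \<Rightarrow> (nat \<Rightarrow> real^'d \<Rightarrow> real) \<Rightarrow> (nat \<Rightarrow> real^'d \<Rightarrow> real^'d) \<Rightarrow> bool"
where
  "valid_instance \<mu> L T f gf \<longleftrightarrow> T \<ge> 1 \<and>
     (\<forall>t\<in>{1..T}. \<forall>x. (f t has_derivative (\<lambda>h. gf t x \<bullet> h)) (at x)) \<and>
     (\<forall>t\<in>{1..T}. \<forall>x. f t x \<ge> 0) \<and>
     (\<forall>t\<in>{1..T}. \<forall>x y.
        \<mu> / 2 * (norm (y - x))\<^sup>2 \<le> f t y - f t x - gf t x \<bullet> (y - x) \<and>
        f t y - f t x - gf t x \<bullet> (y - x) \<le> L / 2 * (norm (y - x))\<^sup>2)"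

definition total_cost :: "nat \<Rightarrow> (nat \<Rightarrow> real^'d \<Rightarrow> real) \<Rightarrow> (nat \<Rightarrow> real^'d) \<Rightarrow> real" where
  "total_cost T f xs = (\<Sum>t=1..T. f t (xs t) + 1/2 * (norm (xs t - xs (t - 1)))\<^sup>2)"

definition opt_cost :: "nat \<Rightarrow> (nat \<Rightarrow> real^'d \<Rightarrow> real) \<Rightarrow> real" where
  "opt_cost T f = Inf {total_cost T f xs | xs. xs 0 = 0}"

text \<open>An algorithm is a pair (Q, X).
  At time t, given its history h (all queries made so far with their answers), it either asks
  for the gradient of f s at a point y (Q t h = Some (s, y)), or stops querying (Q t h = None)
  and plays X t h.  Only gradients of earlier functions f s, 1 \<le> s < t, are revealed; other
  queries are answered by 0 (no information).\<close>

type_synonym 'd hist = "(nat \<times> (real^'d) \<times> (real^'d)) list"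

definition oracle_ans :: "(nat \<Rightarrow> real^'d \<Rightarrow> real^'d) \<Rightarrow> nat \<Rightarrow> nat \<Rightarrow> real^'d \<Rightarrow> real^'d" where
  "oracle_ans gf t s y = (if 1 \<le> s \<and> s < t then gf s y else 0)"

definition qstep ::
  "(nat \<Rightarrow> 'd hist \<Rightarrow> (nat \<times> (real^'d)) option) \<Rightarrow> (nat \<Rightarrow> real^'d \<Rightarrow> real^'d) \<Rightarrow> nat \<Rightarrow> 'd hist \<Rightarrow> 'd hist"
where
  "qstep Q gf t h = (case Q t h of None \<Rightarrow> h | Some (s, y) \<Rightarrow> h @ [(s, y, oracle_ans gf t s y)])"

definition finite_queries :: "(nat \<Rightarrow> 'd hist \<Rightarrow> (nat \<times> (real^'d)) option) \<Rightarrow> bool" where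
  "finite_queries Q \<longleftrightarrow> (\<forall>gf t h. \<exists>n. Q t ((qstep Q gf t ^^ n) h) = None)"

definition phase ::
  "(nat \<Rightarrow> 'd hist \<Rightarrow> (nat \<times> (real^'d)) option) \<Rightarrow> (nat \<Rightarrow> real^'d \<Rightarrow> real^'d) \<Rightarrow> nat \<Rightarrow> 'd hist \<Rightarrow> 'd hist"
where
  "phase Q gf t h = (qstep Q gf t ^^ (LEAST n. Q t ((qstep Q gf t ^^ n) h) = None)) h"

fun history ::
  "(nat \<Rightarrow> 'd hist \<Rightarrow> (nat \<times> (real^'d)) option) \<Rightarrow> (nat \<Rightarrow> real^'d \<Rightarrow> real^'d) \<Rightarrow> nat \<Rightarrow> 'd hist"
where
  "history Q gf 0 = []"
| "history Q gf (Suc t) = phase Q gf (Suc t) (history Q gf t)"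

definition alg_action ::
  "(nat \<Rightarrow> 'd hist \<Rightarrow> (nat \<times> (real^'d)) option) \<Rightarrow> (nat \<Rightarrow> 'd hist \<Rightarrow> real^'d)
     \<Rightarrow> (nat \<Rightarrow> real^'d \<Rightarrow> real^'d) \<Rightarrow> nat \<Rightarrow> real^'d"
where
  "alg_action Q X gf t = (if t = 0 then 0 else X t (history Q gf t))"

end

theory Submission
  imports Defs
begin

text \<open>Nothing about \<open>f\<^sub>1\<close> is revealed before the first action \<open>x\<^sub>1 = p\<close> is
  played, so the adversary may choose \<open>f\<^sub>1 x = L/2 \<parallel>x - a\<parallel>\<^sup>2\<close> with \<open>a \<noteq> 0\<close> on the far side of
  the origin from \<open>p\<close>, i.e. \<open>\<parallel>a\<parallel> \<le> \<parallel>p - a\<parallel>\<close>. With horizon \<open>T = 1\<close> the algorithm pays at least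
  \<open>L/2 \<parallel>a\<parallel>\<^sup>2\<close>, while moving straight to \<open>a\<close> costs only \<open>1/2 \<parallel>a\<parallel>\<^sup>2\<close>.\<close>

definition quad_loss :: "real \<Rightarrow> 'a::real_inner \<Rightarrow> 'a \<Rightarrow> real" where
  "quad_loss L a x = L / 2 * (norm (x - a))\<^sup>2"

definition quad_loss_grad :: "real \<Rightarrow> 'a::real_inner \<Rightarrow> 'a \<Rightarrow> 'a" where
  "quad_loss_grad L a x = L *\<^sub>R (x - a)"

lemma has_derivative_quad_loss:
  "(quad_loss L a has_derivative (\<lambda>h. quad_loss_grad L a x \<bullet> h)) (at x)"
proof -
  have "((\<lambda>x. L / 2 * ((x - a) \<bullet> (x - a))) has_derivative
         (\<lambda>h. L / 2 * (h \<bullet> (x - a) + (x - a) \<bullet> h))) (at x)"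
    by (intro derivative_eq_intros) auto
  moreover have "(\<lambda>h. L / 2 * (h \<bullet> (x - a) + (x - a) \<bullet> h)) = (\<lambda>h. quad_loss_grad L a x \<bullet> h)"
    by (auto simp: quad_loss_grad_def inner_commute algebra_simps)
  ultimately show ?thesis
    by (simp add: quad_loss_def[abs_def] power2_norm_eq_inner)
qed

lemma quad_loss_bregman:
  "quad_loss L a y - quad_loss L a x - quad_loss_grad L a x \<bullet> (y - x) = L / 2 * (norm (y - x))\<^sup>2"
  unfolding quad_loss_def quad_loss_grad_def power2_norm_eq_inner
  by (simp add: inner_diff_left inner_diff_right inner_commute algebra_simps)

lemma valid_instance_quad_loss:
  assumes "0 \<le> \<mu>" "\<mu> \<le> L" "1 \<le> T"
  shows "valid_instance \<mu> L T (\<lambda>t. quad_loss L a) (\<lambda>t. quad_loss_grad L a)"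
  using assms unfolding valid_instance_def quad_loss_bregman
  by (auto simp: has_derivative_quad_loss quad_loss_def intro: mult_right_mono)

lemma total_cost_nonneg:
  assumes "\<forall>t\<in>{1..T}. \<forall>x. f t x \<ge> 0"
  shows "0 \<le> total_cost T f xs"
  unfolding total_cost_def using assms by (intro sum_nonneg) auto

lemma opt_cost_bounds:
  assumes "\<forall>t\<in>{1..T}. \<forall>x. f t x \<ge> 0" and "xs 0 = 0"
  shows "0 \<le> opt_cost T f" and "opt_cost T f \<le> total_cost T f xs"
proof -
  let ?S = "{total_cost T f xs | xs. xs 0 = 0}"
  have lower: "\<And>s. s \<in> ?S \<Longrightarrow> 0 \<le> s"
    using total_cost_nonneg[OF assms(1)] by auto
  have xs: "total_cost T f xs \<in> ?S"
    using assms(2) by auto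
  show "0 \<le> opt_cost T f"
    unfolding opt_cost_def using xs lower by (intro cInf_greatest) auto
  show "opt_cost T f \<le> total_cost T f xs"
    unfolding opt_cost_def using xs lower by (intro cInf_lower bdd_belowI) auto
qed

lemma total_cost_one_quad_loss_lower:
  assumes "0 \<le> L" and "xs 0 = 0" and "norm a \<le> norm (xs 1 - a)"
  shows "L / 2 * (norm a)\<^sup>2 \<le> total_cost 1 (\<lambda>t. quad_loss L a) xs"
proof -
  have "L / 2 * (norm a)\<^sup>2 \<le> L / 2 * (norm (xs 1 - a))\<^sup>2"
    using assms by (simp add: power_mono mult_left_mono)
  then show ?thesis
    using assms(2) by (simp add: total_cost_def quad_loss_def add_increasing2)
qed

lemma opt_cost_one_quad_loss_bounds:
  assumes "0 \<le> L"
  shows "0 \<le> opt_cost 1 (\<lambda>t. quad_loss L a)"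
    and "opt_cost 1 (\<lambda>t. quad_loss L a) \<le> 1 / 2 * (norm a)\<^sup>2"
proof -
  have nonneg: "\<forall>t\<in>{1..1}. \<forall>x. quad_loss L a x \<ge> 0"
    using assms by (simp add: quad_loss_def)
  show "0 \<le> opt_cost 1 (\<lambda>t. quad_loss L a)"
    using opt_cost_bounds(1)[OF nonneg] by simp
  have "total_cost 1 (\<lambda>t. quad_loss L a) (\<lambda>t. if t = 0 then 0 else a) = 1 / 2 * (norm a)\<^sup>2"
    by (simp add: total_cost_def quad_loss_def)
  then show "opt_cost 1 (\<lambda>t. quad_loss L a) \<le> 1 / 2 * (norm a)\<^sup>2"
    using opt_cost_bounds(2)[OF nonneg, of "\<lambda>t. if t = 0 then 0 else a"] by simp
qed

text \<open>In round 1 every query concerns some \<open>f\<^sub>s\<close> with \<open>s \<ge> 1\<close> and is answered by 0.\<close>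

lemma alg_action_1_oblivious:
  "alg_action Q X gf 1 = alg_action Q X gf' 1"
proof -
  have "qstep Q gf (Suc 0) = qstep Q gf' (Suc 0)"
    by (intro ext) (auto simp: qstep_def oracle_ans_def split: option.split)
  then show ?thesis
    by (simp add: alg_action_def phase_def One_nat_def)
qed

lemma exists_nonzero_farther_from:
  fixes p :: "'a::euclidean_space"
  shows "\<exists>a. a \<noteq> 0 \<and> norm a \<le> norm (p - a)"
proof -
  obtain e :: 'a where e: "e \<noteq> 0"
    using norm_some_Basis by force
  obtain a where a: "a \<noteq> 0" "p \<bullet> a \<le> 0"
  proof (cases "p \<bullet> e \<le> 0")
    case True
    with e that show ?thesis by blast
  next
    case False
    with e that[of "- e"] show ?thesis by simp
  qed
  have "(norm (p - a))\<^sup>2 = (norm p)\<^sup>2 - 2 * (p \<bullet> a) + (norm a)\<^sup>2"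
    unfolding power2_norm_eq_inner by (simp add: inner_diff_left inner_diff_right inner_commute)
  then have "(norm a)\<^sup>2 \<le> (norm (p - a))\<^sup>2"
    using a(2) zero_le_power2[of "norm p"] by linarith
  with a(1) show ?thesis
    by (auto intro: power2_le_imp_le)
qed

theorem lemma9:
  fixes \<mu> L :: real
    and Q :: "nat \<Rightarrow> 'd hist \<Rightarrow> (nat \<times> (real^'d)) option"
    and X :: "nat \<Rightarrow> 'd hist \<Rightarrow> real^'d"
  assumes "0 < \<mu>" and "\<mu> \<le> L"
    and "finite_queries Q"
  shows "\<forall>c < L. \<exists>T f gf. valid_instance \<mu> L T f gf \<and>
           total_cost T f (alg_action Q X gf) > c * opt_cost T f"
proof (intro allI impI)
  fix c assume "c < L"
  define p where "p = alg_action Q X (\<lambda>_ _. 0) 1"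
  obtain a :: "real^'d" where a: "a \<noteq> 0" "norm a \<le> norm (p - a)"
    using exists_nonzero_farther_from by blast
  define f where "f = (\<lambda>t::nat. quad_loss L a)"
  have L: "0 \<le> L"
    using assms by simp
  have "alg_action Q X gf 1 = p" for gf
    unfolding p_def by (rule alg_action_1_oblivious)
  then have alg_cost: "L / 2 * (norm a)\<^sup>2 \<le> total_cost 1 f (alg_action Q X gf)" for gf
    unfolding f_def using a(2) L by (intro total_cost_one_quad_loss_lower) (auto simp: alg_action_def)
  note opt_cost = opt_cost_one_quad_loss_bounds[OF L, of a, folded f_def]
  have "c * opt_cost 1 f \<le> max 0 c * (1 / 2 * (norm a)\<^sup>2)"
    using opt_cost by (meson max.cobounded1 max.cobounded2 mult_right_mono mult_left_mono order.trans)
  also have "\<dots> < L / 2 * (norm a)\<^sup>2"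
    using \<open>c < L\<close> a(1) assms by (simp add: max_def)
  also note alg_cost
  finally have "c * opt_cost 1 f < total_cost 1 f (alg_action Q X (\<lambda>t. quad_loss_grad L a))" .
  moreover have "valid_instance \<mu> L 1 f (\<lambda>t. quad_loss_grad L a)"
    unfolding f_def using assms by (intro valid_instance_quad_loss) auto
  ultimately show "\<exists>T f gf. valid_instance \<mu> L T f gf \<and> total_cost T f (alg_action Q X gf) > c * opt_cost T f"
    by blast
qed

end
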